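(* Let $(c_n)_{n\in\mathbb N}$ be positive integers; for each $n$ let $A_n,B_n\in M_{c_{n+1},c_n}(\mathbb Z_+)$ be proper matrices and $T_n\in M_{c_n}(\mathbb Z_+)$ a proper diagonal matrix with $A_nT_n=T_{n+1}B_n$ for all $n$. Then there is a rank-2 Bratteli diagram $\Lambda$ of infinite depth whose associated data is $c_n,A_n,B_n,T_n$ and such that for every blue edge $e$ with $r(e)\in V_{n,j}$ and $s(e)\in V_{n+1,i}$ we have $o(e)=A_n(i,j)\,|V_{n,j}|$.
   Context: A $2$-graph is a countable category $\Lambda$ with a functor $d:\Lambda\to\mathbb N^2$ satisfying unique factorisation (if $d(\lambda)=m+n$ there are unique $\mu,\nu$ with $d(\mu)=m,d(\nu)=n,\lambda=\mu\nu$). Vertices $\Lambda^0$ = degree-$0$ paths; $r,s$ range/source; $\Lambda^n=d^{-1}(n)$; $e_1=(1,0),e_2=(0,1)$; $VEW=\{\lambda\in E:r(\lambda)\in V,s(\lambda)\in W\}$. Row-finite: each $v\Lambda^n$ finite. Blue paths: degree in $\mathbb Ne_1$ (edges $\Lambda^{e_1}$); red paths: degree in $\mathbb Ne_2$ (edges $\Lambda^{e_2}$). $\lambda(m,n)$ is the unique path with $\lambda=\lambda'\lambda(m,n)\lambda''$, $d(\lambda')=m$, $d(\lambda(m,n))=n-m$; $\lambda(n)=\lambda(n,n)$. A cycle: $d(\lambda)\ne0$, $r(\lambda)=s(\lambda)$, $\lambda(n)\ne s(\lambda)$ for $0<n<d(\lambda)$; isolated: no $n\le d(\lambda)$ with $r(\lambda)\Lambda^n\setminus\{\lambda(0,n)\}\ne\emptyset$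 and no $n\le d(\lambda)$ with $\Lambda^ns(\lambda)\setminus\{\lambda(d(\lambda)-n,d(\lambda))\}\ne\emptyset$. A rank-2 Bratteli diagram of infinite depth is a row-finite 2-graph with $\Lambda^0=\bigsqcup_{n\in\mathbb N}V_n$, each $V_n$ nonempty finite, such that every blue edge $e$ has $r(e)\in V_n$, $s(e)\in V_{n+1}$ for some $n$; every $v$ with $\Lambda^{e_1}v=\emptyset$ lies in $V_0$; every vertex receives a blue edge; every vertex lies on an isolated cycle of red edges; and every red edge has range and source in the same $V_n$. Write $V_n=\bigsqcup_{j=1}^{c_n}V_{n,j}$ with $V_{n,j}$ the vertex sets of the distinct isolated red cycles in $V_n$; the associated data are $c_n$, $A_n(i,j)=|v\Lambda^{e_1}V_{n+1,i}|$ ($v\in V_{n,j}$), $B_n(i,j)=|V_{n,j}\Lambda^{e_1}w|$ ($w\in V_{n+1,i}$), and $T_n=\mathrm{diag}(|V_{n,1}|,\dots,|V_{n,c_n}|)$ (these are independent of the choices). For a blue path $\alpha$, let $f$ be the unique red edge with $s(f)=r(\alpha)$ and $\mathcal F(\alpha)$ the unique blue path with $f\alpha=\mathcal F(\alpha)f'$ for a red edge $f'$; $o(\alpha)=\min\{k>0:\mathcal F^k(\alpha)=\alpha\}$. An integer matrix is proper if its entries are nonnegative and every row and column has a nonzero entry. *)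

theory Defs
  imports Main "HOL-Library.Product_Order" "HOL-Library.Product_Plus" "HOL-Library.Countable_Set"
begin

text \<open>A 2-graph is encoded as a small category whose morphisms ("paths") form a set P of
elements of some type 'p.  Objects are identified with their identity morphisms:
r a and s a are the identity morphisms at the range and source of a.  The composition
is c (partial: meaningful when s a = r b), and d is the degree functor into nat x nat
(with componentwise order and addition).\<close>

definition two_graph ::
  "'p set \<Rightarrow> ('p \<Rightarrow> 'p) \<Rightarrow> ('p \<Rightarrow> 'p) \<Rightarrow> ('p \<Rightarrow> 'p \<Rightarrow> 'p) \<Rightarrow> ('p \<Rightarrow> nat \<times> nat) \<Rightarrow> bool" where
  "two_graph P r s c d \<longleftrightarrow>
     countable P \<and>
     (\<forall>a\<in>P. r a \<in> P \<and> s a \<in> P \<and> r (r a) = r a \<and> s (r a) = r a \<and> r (s a) = s a \<and> s (s a) = s a) \<and>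
     (\<forall>a\<in>P. c (r a) a = a \<and> c a (s a) = a) \<and>
     (\<forall>a\<in>P. \<forall>b\<in>P. s a = r b \<longrightarrow> c a b \<in> P \<and> r (c a b) = r a \<and> s (c a b) = s b) \<and>
     (\<forall>a\<in>P. \<forall>b\<in>P. \<forall>e\<in>P. s a = r b \<and> s b = r e \<longrightarrow> c (c a b) e = c a (c b e)) \<and>
     (\<forall>a\<in>P. d (r a) = 0) \<and>
     (\<forall>a\<in>P. \<forall>b\<in>P. s a = r b \<longrightarrow> d (c a b) = d a + d b) \<and>
     (\<forall>l\<in>P. \<forall>m n. d l = m + n \<longrightarrow>
        (\<exists>!q. fst q \<in> P \<and> snd q \<in> P \<and> s (fst q) = r (snd q) \<and>
               d (fst q) = m \<and> d (snd q) = n \<and> c (fst q) (snd q) = l))"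

definition verts :: "'p set \<Rightarrow> ('p \<Rightarrow> nat \<times> nat) \<Rightarrow> 'p set" where
  "verts P d = {a\<in>P. d a = 0}"

definition row_finite ::
  "'p set \<Rightarrow> ('p \<Rightarrow> 'p) \<Rightarrow> ('p \<Rightarrow> nat \<times> nat) \<Rightarrow> bool" where
  "row_finite P r d \<longleftrightarrow> (\<forall>v\<in>verts P d. \<forall>n. finite {a\<in>P. r a = v \<and> d a = n})"

definition seg ::
  "'p set \<Rightarrow> ('p \<Rightarrow> 'p) \<Rightarrow> ('p \<Rightarrow> 'p) \<Rightarrow> ('p \<Rightarrow> 'p \<Rightarrow> 'p) \<Rightarrow> ('p \<Rightarrow> nat \<times> nat)
    \<Rightarrow> 'p \<Rightarrow> nat \<times> nat \<Rightarrow> nat \<times> nat \<Rightarrow> 'p" where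
  "seg P r s c d l m n = (THE \<mu>. \<mu> \<in> P \<and> (\<exists>a\<in>P. \<exists>b\<in>P.
      d a = m \<and> d \<mu> = n - m \<and> d b = d l - n \<and> s a = r \<mu> \<and> s \<mu> = r b \<and> c (c a \<mu>) b = l))"

definition pt ::
  "'p set \<Rightarrow> ('p \<Rightarrow> 'p) \<Rightarrow> ('p \<Rightarrow> 'p) \<Rightarrow> ('p \<Rightarrow> 'p \<Rightarrow> 'p) \<Rightarrow> ('p \<Rightarrow> nat \<times> nat)
    \<Rightarrow> 'p \<Rightarrow> nat \<times> nat \<Rightarrow> 'p" where
  "pt P r s c d l n = seg P r s c d l n n"

definition is_cycle ::
  "'p set \<Rightarrow> ('p \<Rightarrow> 'p) \<Rightarrow> ('p \<Rightarrow> 'p) \<Rightarrow> ('p \<Rightarrow> 'p \<Rightarrow> 'p) \<Rightarrow> ('p \<Rightarrow> nat \<times> nat) \<Rightarrow> 'p \<Rightarrow> bool" where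
  "is_cycle P r s c d l \<longleftrightarrow> l \<in> P \<and> d l \<noteq> 0 \<and> r l = s l \<and>
     (\<forall>n. 0 < n \<and> n < d l \<longrightarrow> pt P r s c d l n \<noteq> s l)"

definition isolated ::
  "'p set \<Rightarrow> ('p \<Rightarrow> 'p) \<Rightarrow> ('p \<Rightarrow> 'p) \<Rightarrow> ('p \<Rightarrow> 'p \<Rightarrow> 'p) \<Rightarrow> ('p \<Rightarrow> nat \<times> nat) \<Rightarrow> 'p \<Rightarrow> bool" where
  "isolated P r s c d l \<longleftrightarrow>
     (\<forall>n \<le> d l. \<forall>\<mu>\<in>P. r \<mu> = r l \<and> d \<mu> = n \<longrightarrow> \<mu> = seg P r s c d l 0 n) \<and>
     (\<forall>n \<le> d l. \<forall>\<mu>\<in>P. s \<mu> = s l \<and> d \<mu> = n \<longrightarrow> \<mu> = seg P r s c d l (d l - n) (d l))"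

definition iso_red_cycle ::
  "'p set \<Rightarrow> ('p \<Rightarrow> 'p) \<Rightarrow> ('p \<Rightarrow> 'p) \<Rightarrow> ('p \<Rightarrow> 'p \<Rightarrow> 'p) \<Rightarrow> ('p \<Rightarrow> nat \<times> nat) \<Rightarrow> 'p \<Rightarrow> bool" where
  "iso_red_cycle P r s c d l \<longleftrightarrow> is_cycle P r s c d l \<and> isolated P r s c d l \<and> fst (d l) = 0"

definition cyc_verts ::
  "'p set \<Rightarrow> ('p \<Rightarrow> 'p) \<Rightarrow> ('p \<Rightarrow> 'p) \<Rightarrow> ('p \<Rightarrow> 'p \<Rightarrow> 'p) \<Rightarrow> ('p \<Rightarrow> nat \<times> nat) \<Rightarrow> 'p \<Rightarrow> 'p set" where
  "cyc_verts P r s c d l = {pt P r s c d l n | n. n \<le> d l}"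

definition bratteli2 ::
  "'p set \<Rightarrow> ('p \<Rightarrow> 'p) \<Rightarrow> ('p \<Rightarrow> 'p) \<Rightarrow> ('p \<Rightarrow> 'p \<Rightarrow> 'p) \<Rightarrow> ('p \<Rightarrow> nat \<times> nat)
    \<Rightarrow> (nat \<Rightarrow> 'p set) \<Rightarrow> bool" where
  "bratteli2 P r s c d V \<longleftrightarrow>
     two_graph P r s c d \<and> row_finite P r d \<and>
     (\<forall>n. V n \<noteq> {} \<and> finite (V n)) \<and>
     (\<forall>m n. m \<noteq> n \<longrightarrow> V m \<inter> V n = {}) \<and>
     (\<Union>n. V n) = verts P d \<and>
     (\<forall>e\<in>P. d e = (1,0) \<longrightarrow> (\<exists>n. r e \<in> V n \<and> s e \<in> V (Suc n))) \<and>
     (\<forall>v\<in>verts P d. \<not> (\<exists>e\<in>P. d e = (1,0) \<and> s e = v) \<longrightarrow> v \<in> V 0) \<and>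
     (\<forall>v\<in>verts P d. \<exists>e\<in>P. d e = (1,0) \<and> r e = v) \<and>
     (\<forall>v\<in>verts P d. \<exists>l. iso_red_cycle P r s c d l \<and> v \<in> cyc_verts P r s c d l) \<and>
     (\<forall>f\<in>P. d f = (0,1) \<longrightarrow> (\<exists>n. r f \<in> V n \<and> s f \<in> V n))"

definition Fmap ::
  "'p set \<Rightarrow> ('p \<Rightarrow> 'p) \<Rightarrow> ('p \<Rightarrow> 'p) \<Rightarrow> ('p \<Rightarrow> 'p \<Rightarrow> 'p) \<Rightarrow> ('p \<Rightarrow> nat \<times> nat) \<Rightarrow> 'p \<Rightarrow> 'p" where
  "Fmap P r s c d \<alpha> =
     (let f = (THE f. f \<in> P \<and> d f = (0,1) \<and> s f = r \<alpha>) in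
      THE \<beta>. \<beta> \<in> P \<and> snd (d \<beta>) = 0 \<and>
        (\<exists>f'\<in>P. d f' = (0,1) \<and> s \<beta> = r f' \<and> c f \<alpha> = c \<beta> f'))"

definition ordF ::
  "'p set \<Rightarrow> ('p \<Rightarrow> 'p) \<Rightarrow> ('p \<Rightarrow> 'p) \<Rightarrow> ('p \<Rightarrow> 'p \<Rightarrow> 'p) \<Rightarrow> ('p \<Rightarrow> nat \<times> nat) \<Rightarrow> 'p \<Rightarrow> nat" where
  "ordF P r s c d \<alpha> = (LEAST k. 0 < k \<and> (Fmap P r s c d ^^ k) \<alpha> = \<alpha>)"

text \<open>Proper matrices (indices 1..rows, 1..cols), entries in nat = Z_+.\<close>
definition proper_mat :: "nat \<Rightarrow> nat \<Rightarrow> (nat \<Rightarrow> nat \<Rightarrow> nat) \<Rightarrow> bool" where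
  "proper_mat rows cols M \<longleftrightarrow>
     (\<forall>i\<in>{1..rows}. \<exists>j\<in>{1..cols}. M i j \<noteq> 0) \<and>
     (\<forall>j\<in>{1..cols}. \<exists>i\<in>{1..rows}. M i j \<noteq> 0)"

end

theory Submission
  imports Defs
begin

text \<open>
  The diagram is a category of normal forms. The vertices of the \<open>j\<close>-th red cycle at level \<open>n\<close>
  are the residues modulo \<open>T\<^sub>n(j)\<close>, and the red edge leaving \<open>x\<close> ends at \<open>x - 1\<close>.
  Between cycle \<open>j\<close> at level \<open>n\<close> and cycle \<open>i\<close> at level \<open>n + 1\<close> there are
  \<open>N = A\<^sub>n(i,j) T\<^sub>n(j) = T\<^sub>n\<^sub>+\<^sub>1(i) B\<^sub>n(i,j)\<close> blue edges, indexed by the residues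
  \<open>k\<close> modulo \<open>N\<close>, with range \<open>k mod T\<^sub>n(j)\<close> and source \<open>k mod T\<^sub>n\<^sub>+\<^sub>1(i)\<close>; so every
  vertex of the first cycle emits \<open>A\<^sub>n(i,j)\<close> of them and every vertex of the second receives
  \<open>B\<^sub>n(i,j)\<close>. A path is a chain of blue edges followed by a number of red edges. Since both
  cycle lengths divide \<open>N\<close>, a red edge can be moved past a blue edge \<open>k\<close> at the price of
  replacing it by \<open>k + 1\<close>; this commutation is the factorisation property, and it makes
  \<open>F\<close> the rotation \<open>k \<mapsto> k + 1\<close> of each bundle, whose period is \<open>N = A\<^sub>n(i,j) |V\<^sub>n\<^sub>,\<^sub>j|\<close>.
\<close>

lemma
  assumes "two_graph P r s c d" and "a \<in> P"
  shows two_graph_range_in: "r a \<in> P"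
    and two_graph_source_in: "s a \<in> P"
    and two_graph_source_range: "s (r a) = r a"
    and two_graph_range_source: "r (s a) = s a"
    and two_graph_source_source: "s (s a) = s a"
    and two_graph_comp_range: "c (r a) a = a"
    and two_graph_comp_source: "c a (s a) = a"
    and two_graph_deg_range: "d (r a) = 0"
  using assms unfolding two_graph_def by blast+

lemma two_graph_comp:
  assumes "two_graph P r s c d" and "a \<in> P" "b \<in> P" "s a = r b"
  shows "c a b \<in> P" "r (c a b) = r a" "s (c a b) = s b" "d (c a b) = d a + d b"
  using assms unfolding two_graph_def by blast+

lemma two_graph_deg_source:
  assumes "two_graph P r s c d" and "a \<in> P"
  shows "d (s a) = 0"
  using two_graph_deg_range[OF assms(1) two_graph_source_in[OF assms]]
  unfolding two_graph_range_source[OF assms] .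

lemma two_graph_unique_factorisation:
  assumes "two_graph P r s c d" "l \<in> P" "d l = m + n"
  shows "\<exists>!q. fst q \<in> P \<and> snd q \<in> P \<and> s (fst q) = r (snd q) \<and>
               d (fst q) = m \<and> d (snd q) = n \<and> c (fst q) (snd q) = l"
proof -
  have "\<forall>l\<in>P. \<forall>m n. d l = m + n \<longrightarrow>
        (\<exists>!q. fst q \<in> P \<and> snd q \<in> P \<and> s (fst q) = r (snd q) \<and>
               d (fst q) = m \<and> d (snd q) = n \<and> c (fst q) (snd q) = l)"
    using assms(1) unfolding two_graph_def by (elim conjE)
  then show ?thesis
    using assms(2,3) by blast
qed

lemma two_graph_factors_eq:
  assumes tg: "two_graph P r s c d"
    and a: "a \<in> P" "b \<in> P" "s a = r b"
    and a': "a' \<in> P" "b' \<in> P" "s a' = r b'"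
    and deg: "d a = d a'" "d b = d b'" and eq: "c a b = c a' b'"
  shows "a = a' \<and> b = b'"
proof -
  have "\<exists>!q. fst q \<in> P \<and> snd q \<in> P \<and> s (fst q) = r (snd q) \<and>
               d (fst q) = d a \<and> d (snd q) = d b \<and> c (fst q) (snd q) = c a b"
    using two_graph_unique_factorisation[OF tg two_graph_comp(1,4)[OF tg a]] .
  then have "(a, b) = (a', b')"
    using a a' deg eq by (metis fst_conv snd_conv)
  then show ?thesis by simp
qed

lemma seg_eqI:
  assumes tg: "two_graph P r s c d"
    and a: "a \<in> P" "\<mu> \<in> P" "b \<in> P" "s a = r \<mu>" "s \<mu> = r b"
  shows "seg P r s c d (c (c a \<mu>) b) (d a) (d a + d \<mu>) = \<mu>"
  unfolding seg_def
proof (rule the_equality)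
  let ?l = "c (c a \<mu>) b"
  note a\<mu> = two_graph_comp[OF tg a(1,2,4)]
  have dl: "d ?l - (d a + d \<mu>) = d b"
    using two_graph_comp(4)[OF tg a\<mu>(1) a(3)] a\<mu>(3,4) a(5) by simp
  show "\<mu> \<in> P \<and> (\<exists>a'\<in>P. \<exists>b'\<in>P. d a' = d a \<and> d \<mu> = (d a + d \<mu>) - d a \<and>
      d b' = d ?l - (d a + d \<mu>) \<and> s a' = r \<mu> \<and> s \<mu> = r b' \<and> c (c a' \<mu>) b' = ?l)"
    using a dl by (intro conjI bexI[of _ a] bexI[of _ b]) simp_all
  fix \<nu> assume "\<nu> \<in> P \<and> (\<exists>a'\<in>P. \<exists>b'\<in>P. d a' = d a \<and> d \<nu> = (d a + d \<mu>) - d a \<and>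
      d b' = d ?l - (d a + d \<mu>) \<and> s a' = r \<nu> \<and> s \<nu> = r b' \<and> c (c a' \<nu>) b' = ?l)"
  then obtain a' b' where \<nu>: "\<nu> \<in> P" "a' \<in> P" "b' \<in> P" "d a' = d a" "d \<nu> = d \<mu>"
      "d b' = d b" "s a' = r \<nu>" "s \<nu> = r b'" "c (c a' \<nu>) b' = ?l"
    unfolding dl add_diff_cancel_left' by blast
  note a'\<nu> = two_graph_comp[OF tg \<nu>(2,1,7)]
  have "c a' \<nu> = c a \<mu>"
    using two_graph_factors_eq[OF tg a'\<nu>(1) \<nu>(3) _ a\<mu>(1) a(3)] a'\<nu> a\<mu> \<nu> a(5) by simp
  then show "\<nu> = \<mu>"
    using two_graph_factors_eq[OF tg \<nu>(2,1,7) a(1,2,4)] \<nu>(4,5) by simp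
qed

lemma seg_prefix:
  assumes tg: "two_graph P r s c d" and "\<mu> \<in> P" "b \<in> P" "s \<mu> = r b"
  shows "seg P r s c d (c \<mu> b) 0 (d \<mu>) = \<mu>"
  using seg_eqI[OF tg, of "r \<mu>" \<mu> b] assms
  by (simp add: two_graph_range_in two_graph_source_range two_graph_comp_range two_graph_deg_range)

lemma seg_suffix:
  assumes tg: "two_graph P r s c d" and "a \<in> P" "\<mu> \<in> P" "s a = r \<mu>"
  shows "seg P r s c d (c a \<mu>) (d a) (d a + d \<mu>) = \<mu>"
proof -
  have eq: "c (c a \<mu>) (s \<mu>) = c a \<mu>"
    using two_graph_comp_source[OF tg two_graph_comp(1)[OF tg assms(2-4)]]
    unfolding two_graph_comp(3)[OF tg assms(2-4)] .
  have "seg P r s c d (c (c a \<mu>) (s \<mu>)) (d a) (d a + d \<mu>) = \<mu>"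
    by (rule seg_eqI[OF tg assms(2,3) two_graph_source_in[OF tg assms(3)] assms(4)
          two_graph_range_source[OF tg assms(3), symmetric]])
  then show ?thesis
    unfolding eq .
qed

lemma pt_prefix:
  assumes tg: "two_graph P r s c d" and "\<mu> \<in> P" "b \<in> P" "s \<mu> = r b"
  shows "pt P r s c d (c \<mu> b) (d \<mu>) = s \<mu>"
proof -
  note s\<mu> = two_graph_source_in[OF tg assms(2)] two_graph_range_source[OF tg assms(2)]
    two_graph_source_source[OF tg assms(2)] two_graph_comp_source[OF tg assms(2)]
    two_graph_deg_source[OF tg assms(2)]
  have "seg P r s c d (c (c \<mu> (s \<mu>)) b) (d \<mu>) (d \<mu> + d (s \<mu>)) = s \<mu>"
    by (rule seg_eqI[OF tg assms(2) s\<mu>(1) assms(3)]) (simp_all only: s\<mu>(2,3) assms(4)[symmetric])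
  then show ?thesis
    unfolding pt_def s\<mu>(4,5) by simp
qed

lemma Fmap_eqI:
  assumes tg: "two_graph P r s c d"
    and f: "f \<in> P" "d f = (0, 1)" "s f = r \<alpha>"
    and f_unique: "\<And>g. g \<in> P \<Longrightarrow> d g = (0, 1) \<Longrightarrow> s g = r \<alpha> \<Longrightarrow> g = f"
    and \<alpha>: "\<alpha> \<in> P" "snd (d \<alpha>) = 0"
    and \<beta>: "\<beta> \<in> P" "f' \<in> P" "s \<beta> = r f'" "d \<beta> = d \<alpha>" "d f' = (0, 1)" "c f \<alpha> = c \<beta> f'"
  shows "Fmap P r s c d \<alpha> = \<beta>"
proof -
  have "(THE g. g \<in> P \<and> d g = (0, 1) \<and> s g = r \<alpha>) = f"
    using f f_unique by (intro the_equality) blast+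
  moreover have "(THE \<gamma>. \<gamma> \<in> P \<and> snd (d \<gamma>) = 0 \<and>
      (\<exists>g\<in>P. d g = (0, 1) \<and> s \<gamma> = r g \<and> c f \<alpha> = c \<gamma> g)) = \<beta>"
  proof (rule the_equality)
    show "\<beta> \<in> P \<and> snd (d \<beta>) = 0 \<and> (\<exists>g\<in>P. d g = (0, 1) \<and> s \<beta> = r g \<and> c f \<alpha> = c \<beta> g)"
      using \<alpha> \<beta> by auto
    fix \<gamma> assume "\<gamma> \<in> P \<and> snd (d \<gamma>) = 0 \<and> (\<exists>g\<in>P. d g = (0, 1) \<and> s \<gamma> = r g \<and> c f \<alpha> = c \<gamma> g)"
    then obtain g where \<gamma>: "\<gamma> \<in> P" "g \<in> P" "s \<gamma> = r g" "d g = (0, 1)" "c f \<alpha> = c \<gamma> g"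
      by blast
    have "d \<gamma> + (0, 1) = d \<alpha> + (0, 1)"
      using two_graph_comp(4)[OF tg \<gamma>(1-3)] two_graph_comp(4)[OF tg f(1) \<alpha>(1) f(3)] f(2) \<gamma>(4,5)
      by (simp add: add.commute)
    then have "d \<gamma> = d \<alpha>"
      by simp
    then show "\<gamma> = \<beta>"
      using two_graph_factors_eq[OF tg \<gamma>(1-3) \<beta>(1-3)] \<beta>(4,5,6) \<gamma>(4,5) by simp
  qed
  ultimately show ?thesis
    unfolding Fmap_def Let_def by simp
qed

lemma two_graph_relabel:
  assumes tg: "two_graph P r s c d" and gh: "\<And>x. g (h x) = x"
  shows "two_graph (h ` P) (\<lambda>x. h (r (g x))) (\<lambda>x. h (s (g x))) (\<lambda>x y. h (c (g x) (g y)))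
    (\<lambda>x. d (g x))"
proof -
  have inj: "inj h"
    by (rule inj_on_inverseI[of _ g]) (rule gh)
  have "\<exists>!q. fst q \<in> h ` P \<and> snd q \<in> h ` P \<and> s (g (fst q)) = r (g (snd q)) \<and>
      d (g (fst q)) = m \<and> d (g (snd q)) = n \<and> c (g (fst q)) (g (snd q)) = l"
    if l: "l \<in> P" "d l = m + n" for l m n
  proof -
    obtain q where q: "fst q \<in> P \<and> snd q \<in> P \<and> s (fst q) = r (snd q) \<and>
        d (fst q) = m \<and> d (snd q) = n \<and> c (fst q) (snd q) = l"
      and q_unique: "\<And>q'. fst q' \<in> P \<and> snd q' \<in> P \<and> s (fst q') = r (snd q') \<and>
        d (fst q') = m \<and> d (snd q') = n \<and> c (fst q') (snd q') = l \<Longrightarrow> q' = q"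
      using two_graph_unique_factorisation[OF tg l] by blast
    show ?thesis
    proof (rule ex1I[of _ "map_prod h h q"])
      show "fst (map_prod h h q) \<in> h ` P \<and> snd (map_prod h h q) \<in> h ` P \<and>
        s (g (fst (map_prod h h q))) = r (g (snd (map_prod h h q))) \<and>
        d (g (fst (map_prod h h q))) = m \<and> d (g (snd (map_prod h h q))) = n \<and>
        c (g (fst (map_prod h h q))) (g (snd (map_prod h h q))) = l"
        using q by (simp add: gh map_prod_def split_beta)
      fix q' assume "fst q' \<in> h ` P \<and> snd q' \<in> h ` P \<and> s (g (fst q')) = r (g (snd q')) \<and>
        d (g (fst q')) = m \<and> d (g (snd q')) = n \<and> c (g (fst q')) (g (snd q')) = l"
      moreover from this obtain a b where "q' = (h a, h b)"
        by (metis imageE prod.collapse)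
      ultimately show "q' = map_prod h h q"
        using q_unique[of "(a, b)"] inj by (auto simp: gh inj_image_mem_iff)
    qed
  qed
  then show ?thesis
    using tg unfolding two_graph_def by (simp add: gh inj_image_mem_iff[OF inj] inj_eq[OF inj])
qed

lemma row_finite_relabel:
  assumes rf: "row_finite P r d" and gh: "\<And>x. g (h x) = x"
  shows "row_finite (h ` P) (\<lambda>x. h (r (g x))) (\<lambda>x. d (g x))"
  unfolding row_finite_def
proof (intro ballI allI)
  have inj: "inj h"
    by (rule inj_on_inverseI[of _ g]) (rule gh)
  fix v n assume "v \<in> verts (h ` P) (\<lambda>x. d (g x))"
  then obtain w where w: "w \<in> verts P d" "v = h w"
    by (auto simp: verts_def gh)
  have "{a \<in> h ` P. h (r (g a)) = v \<and> d (g a) = n} = h ` {a \<in> P. r a = w \<and> d a = n}"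
    using w inj by (auto simp: gh inj_eq)
  moreover have "finite {a \<in> P. r a = w \<and> d a = n}"
    using rf w unfolding row_finite_def by blast
  ultimately show "finite {a \<in> h ` P. h (r (g a)) = v \<and> d (g a) = n}"
    by simp
qed

lemma card_residue_class:
  fixes t x :: int
  assumes x: "0 \<le> x" "x < t"
  shows "card {k \<in> {0..<int q * t}. k mod t = x} = q"
proof -
  have "{k \<in> {0..<int q * t}. k mod t = x} = (\<lambda>p. t * p + x) ` {0..<int q}"
  proof (intro set_eqI iffI)
    fix k assume "k \<in> {k \<in> {0..<int q * t}. k mod t = x}"
    then have k: "0 \<le> k" "k < int q * t" "k = t * (k div t) + x"
      using mult_div_mod_eq[of t k] by auto
    have "0 \<le> k div t"
      using k(1) x by (simp add: pos_imp_zdiv_nonneg_iff)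
    moreover have "k div t * t < int q * t"
      using k(2,3) x by (metis add_increasing2 le_less_trans mult.commute order_refl)
    then have "k div t < int q"
      using x by (simp add: mult_less_cancel_right)
    ultimately show "k \<in> (\<lambda>p. t * p + x) ` {0..<int q}"
      using k(3) by (intro image_eqI[of _ _ "k div t"]) auto
  next
    fix k assume "k \<in> (\<lambda>p. t * p + x) ` {0..<int q}"
    then obtain p where p: "0 \<le> p" "p + 1 \<le> int q" "k = t * p + x"
      by auto
    have "t * (p + 1) \<le> t * int q"
      using p x by (intro mult_left_mono) auto
    then show "k \<in> {k \<in> {0..<int q * t}. k mod t = x}"
      using p x by (simp add: algebra_simps)
  qed
  moreover have "inj_on (\<lambda>p. t * p + x) {0..<int q}"
    using x by (auto simp: inj_on_def)
  ultimately show ?thesis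
    by (simp add: card_image)
qed

lemma neg_mod_eq_diff: "0 < q \<Longrightarrow> q < t \<Longrightarrow> (- q) mod t = t - (q :: int)"
  by (simp add: zmod_zminus1_eq_if)

lemma Least_positive_dvd:
  fixes N :: nat
  assumes "0 < N"
  shows "(LEAST k. 0 < k \<and> N dvd k) = N"
  using assms by (intro Least_equality) (auto dest: dvd_imp_le)

lemma sum_eq_single:
  fixes f :: "'a \<Rightarrow> 'b::comm_monoid_add"
  assumes "finite K" "k \<in> K" "\<forall>k'\<in>K. k' \<noteq> k \<longrightarrow> f k' = 0"
  shows "sum f K = f k"
  using sum.remove[OF assms(1,2), of f] sum.neutral[of "K - {k}" f] assms(3) by simp

section \<open>The path category of the diagram\<close>

text \<open>
  A vertex \<open>(n, j, x)\<close> is the residue \<open>x\<close> on the \<open>j\<close>-th cycle of level \<open>n\<close>; an edge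
  \<open>(n, i, j, k)\<close> is the \<open>k\<close>-th blue edge from cycle \<open>j\<close> at level \<open>n\<close> to cycle \<open>i\<close> at
  level \<open>n + 1\<close>; a path \<open>(v, es, b)\<close> is the blue chain \<open>es\<close> starting at \<open>v\<close> followed by
  \<open>b\<close> red edges.
\<close>

type_synonym vertex = "nat \<times> nat \<times> int"
type_synonym edge = "nat \<times> nat \<times> nat \<times> int"
type_synonym path = "vertex \<times> edge list \<times> nat"

locale bratteli_data =
  fixes cn :: "nat \<Rightarrow> nat"
    and A B T :: "nat \<Rightarrow> nat \<Rightarrow> nat \<Rightarrow> nat"
  assumes cn_pos: "\<forall>n. 0 < cn n"
    and A_proper: "\<forall>n. proper_mat (cn (Suc n)) (cn n) (A n)"
    and B_proper: "\<forall>n. proper_mat (cn (Suc n)) (cn n) (B n)"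
    and T_proper: "\<forall>n. proper_mat (cn n) (cn n) (T n)"
    and T_diag: "\<forall>n. \<forall>i\<in>{1..cn n}. \<forall>j\<in>{1..cn n}. i \<noteq> j \<longrightarrow> T n i j = 0"
    and AT_eq_TB: "\<forall>n. \<forall>i\<in>{1..cn (Suc n)}. \<forall>j\<in>{1..cn n}.
      (\<Sum>k=1..cn n. A n i k * T n k j) = (\<Sum>k=1..cn (Suc n). T (Suc n) i k * B n k j)"
begin

definition cycle_len :: "nat \<Rightarrow> nat \<Rightarrow> int" where
  "cycle_len n j = int (T n j j)"

definition bundle_size :: "nat \<Rightarrow> nat \<Rightarrow> nat \<Rightarrow> int" where
  "bundle_size n i j = int (A n i j * T n j j)"

lemma T_diag_pos: "j \<in> {1..cn n} \<Longrightarrow> 0 < T n j j"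
  using T_proper T_diag unfolding proper_mat_def by (metis neq0_conv)

lemma cycle_len_pos: "j \<in> {1..cn n} \<Longrightarrow> 0 < cycle_len n j"
  by (simp add: cycle_len_def T_diag_pos)

lemma diag_AT_eq_TB:
  assumes i: "i \<in> {1..cn (Suc n)}" and j: "j \<in> {1..cn n}"
  shows "A n i j * T n j j = T (Suc n) i i * B n i j"
proof -
  have "(\<Sum>k=1..cn n. A n i k * T n k j) = A n i j * T n j j"
    using j T_diag by (intro sum_eq_single) auto
  moreover have "(\<Sum>k=1..cn (Suc n). T (Suc n) i k * B n k j) = T (Suc n) i i * B n i j"
    using i T_diag by (intro sum_eq_single) auto
  ultimately show ?thesis
    using AT_eq_TB i j by metis
qed

lemma bundle_size_eq_B:
  "i \<in> {1..cn (Suc n)} \<Longrightarrow> j \<in> {1..cn n} \<Longrightarrow>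
    bundle_size n i j = int (B n i j) * cycle_len (Suc n) i"
  by (simp add: bundle_size_def cycle_len_def diag_AT_eq_TB)

lemma cycle_len_dvd_bundle_size: "cycle_len n j dvd bundle_size n i j"
  by (simp add: bundle_size_def cycle_len_def)

lemma cycle_len_Suc_dvd_bundle_size:
  "i \<in> {1..cn (Suc n)} \<Longrightarrow> j \<in> {1..cn n} \<Longrightarrow> cycle_len (Suc n) i dvd bundle_size n i j"
  by (simp add: bundle_size_eq_B)

fun is_vertex :: "vertex \<Rightarrow> bool" where
  "is_vertex (n, j, x) \<longleftrightarrow> j \<in> {1..cn n} \<and> 0 \<le> x \<and> x < cycle_len n j"

fun is_edge :: "edge \<Rightarrow> bool" where
  "is_edge (n, i, j, k) \<longleftrightarrow>
    i \<in> {1..cn (Suc n)} \<and> j \<in> {1..cn n} \<and> 0 \<le> k \<and> k < bundle_size n i j"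

fun edge_range :: "edge \<Rightarrow> vertex" where
  "edge_range (n, i, j, k) = (n, j, k mod cycle_len n j)"

fun edge_source :: "edge \<Rightarrow> vertex" where
  "edge_source (n, i, j, k) = (Suc n, i, k mod cycle_len (Suc n) i)"

fun rotate_vertex :: "int \<Rightarrow> vertex \<Rightarrow> vertex" where
  "rotate_vertex b (n, j, x) = (n, j, (x + b) mod cycle_len n j)"

fun rotate_edge :: "int \<Rightarrow> edge \<Rightarrow> edge" where
  "rotate_edge b (n, i, j, k) = (n, i, j, (k + b) mod bundle_size n i j)"

lemma fst_rotate_vertex [simp]: "fst (rotate_vertex b v) = fst v"
  by (cases v rule: prod_cases3) simp

lemma rotate_vertex_add: "rotate_vertex a (rotate_vertex b v) = rotate_vertex (b + a) v"
  by (cases v rule: prod_cases3) (simp add: mod_add_left_eq add.assoc)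

lemma rotate_edge_add: "rotate_edge a (rotate_edge b e) = rotate_edge (b + a) e"
  by (cases e rule: prod_cases4) (simp add: mod_add_left_eq add.assoc)

lemma rotate_vertex_0: "is_vertex v \<Longrightarrow> rotate_vertex 0 v = v"
  by (cases v rule: prod_cases3) simp

lemma rotate_edge_0: "is_edge e \<Longrightarrow> rotate_edge 0 e = e"
  by (cases e rule: prod_cases4) simp

lemma rotate_vertex_cancel: "is_vertex v \<Longrightarrow> rotate_vertex b (rotate_vertex (- b) v) = v"
  by (simp add: rotate_vertex_add rotate_vertex_0)

lemma is_vertex_rotate: "is_vertex v \<Longrightarrow> is_vertex (rotate_vertex b v)"
  by (cases v rule: prod_cases3) simp

lemma is_edge_rotate: "is_edge e \<Longrightarrow> is_edge (rotate_edge b e)"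
  by (cases e rule: prod_cases4) simp

lemma is_vertex_edge_range: "is_edge e \<Longrightarrow> is_vertex (edge_range e)"
  by (cases e rule: prod_cases4) (simp add: cycle_len_pos)

lemma is_vertex_edge_source: "is_edge e \<Longrightarrow> is_vertex (edge_source e)"
  by (cases e rule: prod_cases4) (simp add: cycle_len_pos)

lemma edge_range_rotate: "edge_range (rotate_edge b e) = rotate_vertex b (edge_range e)"
  by (cases e rule: prod_cases4)
    (simp add: mod_mod_cancel[OF cycle_len_dvd_bundle_size] mod_add_left_eq)

lemma edge_source_rotate: "is_edge e \<Longrightarrow> edge_source (rotate_edge b e) = rotate_vertex b (edge_source e)"
  by (cases e rule: prod_cases4)
    (simp add: mod_mod_cancel[OF cycle_len_Suc_dvd_bundle_size] mod_add_left_eq)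

fun is_chain :: "vertex \<Rightarrow> edge list \<Rightarrow> bool" where
  "is_chain v [] \<longleftrightarrow> True"
| "is_chain v (e # es) \<longleftrightarrow> edge_range e = v \<and> is_chain (edge_source e) es"

fun chain_end :: "vertex \<Rightarrow> edge list \<Rightarrow> vertex" where
  "chain_end v [] = v"
| "chain_end v (e # es) = chain_end (edge_source e) es"

lemma is_chain_append: "is_chain v (es @ fs) \<longleftrightarrow> is_chain v es \<and> is_chain (chain_end v es) fs"
  by (induction es arbitrary: v) auto

lemma chain_end_append: "chain_end v (es @ fs) = chain_end (chain_end v es) fs"
  by (induction es arbitrary: v) auto

lemma is_chain_rotate:
  "\<forall>e\<in>set es. is_edge e \<Longrightarrow> is_chain v es \<Longrightarrow> is_chain (rotate_vertex b v) (map (rotate_edge b) es)"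
  by (induction es arbitrary: v) (auto simp: edge_range_rotate edge_source_rotate)

lemma chain_end_rotate:
  "\<forall>e\<in>set es. is_edge e \<Longrightarrow>
    chain_end (rotate_vertex b v) (map (rotate_edge b) es) = rotate_vertex b (chain_end v es)"
  by (induction es arbitrary: v) (auto simp: edge_source_rotate)

lemma is_vertex_chain_end: "is_vertex v \<Longrightarrow> \<forall>e\<in>set es. is_edge e \<Longrightarrow> is_vertex (chain_end v es)"
  by (induction es arbitrary: v) (auto simp: is_vertex_edge_source)

lemma map_rotate_edge_0: "\<forall>e\<in>set es. is_edge e \<Longrightarrow> map (rotate_edge 0) es = es"
  by (induction es) (auto simp: rotate_edge_0)

lemma map_rotate_edge_cancel:
  "\<forall>e\<in>set es. is_edge e \<Longrightarrow> map (rotate_edge b) (map (rotate_edge (- b)) es) = es"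
  by (simp add: comp_def rotate_edge_add map_rotate_edge_0[unfolded list.map_ident_strong])

definition paths :: "path set" where
  "paths = {(v, es, b). is_vertex v \<and> (\<forall>e\<in>set es. is_edge e) \<and> is_chain v es}"

fun path_range :: "path \<Rightarrow> path" where
  "path_range (v, es, b) = (v, [], 0)"

fun path_source :: "path \<Rightarrow> path" where
  "path_source (v, es, b) = (rotate_vertex (- int b) (chain_end v es), [], 0)"

fun path_comp :: "path \<Rightarrow> path \<Rightarrow> path" where
  "path_comp (v, es, b) (w, fs, b') = (v, es @ map (rotate_edge (int b)) fs, b + b')"

fun path_deg :: "path \<Rightarrow> nat \<times> nat" where
  "path_deg (v, es, b) = (length es, b)"

lemma in_paths_iff [simp]:
  "(v, es, b) \<in> paths \<longleftrightarrow> is_vertex v \<and> (\<forall>e\<in>set es. is_edge e) \<and> is_chain v es"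
  by (simp add: paths_def)

lemma paths_comp:
  assumes "p \<in> paths" "q \<in> paths" "path_source p = path_range q"
  shows "path_comp p q \<in> paths \<and> path_range (path_comp p q) = path_range p \<and>
    path_source (path_comp p q) = path_source q"
proof -
  obtain v es b where p: "p = (v, es, b)" by (cases p rule: prod_cases3)
  obtain w fs b' where q: "q = (w, fs, b')" by (cases q rule: prod_cases3)
  have h: "is_vertex v" "\<forall>e\<in>set es. is_edge e" "is_chain v es" "\<forall>e\<in>set fs. is_edge e" "is_chain w fs"
    "rotate_vertex (- int b) (chain_end v es) = w"
    using assms by (auto simp: p q)
  have w: "rotate_vertex (int b) w = chain_end v es"
    using h(6) rotate_vertex_cancel[OF is_vertex_chain_end[OF h(1,2)]] by blast
  have chain: "is_chain v (es @ map (rotate_edge (int b)) fs)"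
    using h(3) is_chain_rotate[OF h(4,5), of "int b"] w by (simp add: is_chain_append)
  have "path_source (path_comp p q) = (rotate_vertex (- int (b + b'))
      (chain_end (rotate_vertex (int b) w) (map (rotate_edge (int b)) fs)), [], 0)"
    by (simp add: p q chain_end_append w)
  also have "\<dots> = path_source q"
    using chain_end_rotate[OF h(4)] by (simp add: q rotate_vertex_add)
  finally show ?thesis
    using h chain is_edge_rotate by (auto simp: p q)
qed

lemma path_comp_assoc: "path_comp (path_comp p q) u = path_comp p (path_comp q u)"
  by (cases p rule: prod_cases3; cases q rule: prod_cases3; cases u rule: prod_cases3)
    (simp add: comp_def rotate_edge_add add.commute)

lemma paths_unique_factorisation:
  assumes l: "l \<in> paths" "path_deg l = m + n"
  shows "\<exists>!q. fst q \<in> paths \<and> snd q \<in> paths \<and> path_source (fst q) = path_range (snd q) \<and>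
    path_deg (fst q) = m \<and> path_deg (snd q) = n \<and> path_comp (fst q) (snd q) = l"
proof -
  obtain v es b where l_eq: "l = (v, es, b)" by (cases l rule: prod_cases3)
  obtain m1 m2 where m: "m = (m1, m2)" by (cases m)
  obtain n1 n2 where n: "n = (n1, n2)" by (cases n)
  have h: "is_vertex v" "\<forall>e\<in>set es. is_edge e" "is_chain v es" "length es = m1 + n1" "b = m2 + n2"
    using l by (auto simp: l_eq m n)
  let ?w = "rotate_vertex (- int m2) (chain_end v (take m1 es))"
  let ?Q = "\<lambda>q. fst q \<in> paths \<and> snd q \<in> paths \<and> path_source (fst q) = path_range (snd q) \<and>
    path_deg (fst q) = m \<and> path_deg (snd q) = n \<and> path_comp (fst q) (snd q) = l"
  show ?thesis
  proof (rule ex1I[of ?Q "((v, take m1 es, m2), (?w, map (rotate_edge (- int m2)) (drop m1 es), n2))"])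
    have "is_chain v (take m1 es)" "is_chain (chain_end v (take m1 es)) (drop m1 es)"
      using h(3) is_chain_append[of v "take m1 es" "drop m1 es"] by auto
    moreover have "\<forall>e\<in>set (take m1 es). is_edge e" "\<forall>e\<in>set (drop m1 es). is_edge e"
      using h(2) by (auto dest: in_set_takeD in_set_dropD)
    ultimately show "?Q ((v, take m1 es, m2), (?w, map (rotate_edge (- int m2)) (drop m1 es), n2))"
      using h is_vertex_chain_end is_vertex_rotate is_edge_rotate is_chain_rotate map_rotate_edge_cancel
      by (auto simp: l_eq m n)
  next
    fix q assume Q: "?Q q"
    obtain v1 es1 b1 w2 fs2 b2 where q: "q = ((v1, es1, b1), (w2, fs2, b2))"
      by (metis prod.collapse)
    have g: "\<forall>e\<in>set fs2. is_edge e" "length es1 = m1" "b1 = m2" "v1 = v"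
      "es1 @ map (rotate_edge (int m2)) fs2 = es" "b2 = n2" "w2 = rotate_vertex (- int m2) (chain_end v1 es1)"
      using Q by (auto simp: q m n l_eq)
    then have "es1 = take m1 es" "map (rotate_edge (int m2)) fs2 = drop m1 es"
      by (metis append_eq_conv_conj)+
    then show "q = ((v, take m1 es, m2), (?w, map (rotate_edge (- int m2)) (drop m1 es), n2))"
      using g map_rotate_edge_cancel[OF g(1), of "- int m2"] by (simp add: q)
  qed
qed

lemma two_graph_paths: "two_graph paths path_range path_source path_comp path_deg"
  unfolding two_graph_def
proof (intro conjI)
  show "countable paths"
    by (rule countableI_type)
  have p: "is_vertex v" "\<forall>e\<in>set es. is_edge e" if "(v, es, b) \<in> paths" for v es b
    using that by auto
  show "\<forall>p\<in>paths. path_range p \<in> paths \<and> path_source p \<in> paths \<and> path_range (path_range p) = path_range p \<and>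
      path_source (path_range p) = path_range p \<and> path_range (path_source p) = path_source p \<and>
      path_source (path_source p) = path_source p"
    using p by (auto simp: is_vertex_chain_end is_vertex_rotate rotate_vertex_0)
  show "\<forall>p\<in>paths. path_comp (path_range p) p = p \<and> path_comp p (path_source p) = p"
    using p by (auto simp: map_rotate_edge_0)
  show "\<forall>p\<in>paths. path_deg (path_range p) = 0"
    by (auto simp: zero_prod_def)
  show "\<forall>p\<in>paths. \<forall>q\<in>paths. path_source p = path_range q \<longrightarrow> path_comp p q \<in> paths \<and>
      path_range (path_comp p q) = path_range p \<and> path_source (path_comp p q) = path_source q"
    using paths_comp by blast
  show "\<forall>p\<in>paths. \<forall>q\<in>paths. path_source p = path_range q \<longrightarrow>
      path_deg (path_comp p q) = path_deg p + path_deg q"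
    by (auto split: prod.split)
  show "\<forall>p\<in>paths. \<forall>q\<in>paths. \<forall>u\<in>paths. path_source p = path_range q \<and> path_source q = path_range u \<longrightarrow>
      path_comp (path_comp p q) u = path_comp p (path_comp q u)"
    by (simp add: path_comp_assoc)
  show "\<forall>l\<in>paths. \<forall>m n. path_deg l = m + n \<longrightarrow> (\<exists>!q. fst q \<in> paths \<and> snd q \<in> paths \<and>
      path_source (fst q) = path_range (snd q) \<and> path_deg (fst q) = m \<and> path_deg (snd q) = n \<and>
      path_comp (fst q) (snd q) = l)"
    using paths_unique_factorisation by blast
qed

lemma chain_edge_levels: "is_chain w es \<Longrightarrow> e \<in> set es \<Longrightarrow> fst e < fst w + length es"
proof (induction es arbitrary: w)
  case (Cons e' es)
  then show ?case
    by (cases e' rule: prod_cases4) force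
qed simp

lemma finite_edges_below: "finite {e. is_edge e \<and> fst e < L}"
proof (rule finite_subset)
  show "{e. is_edge e \<and> fst e < L} \<subseteq>
      (\<Union>n<L. \<Union>i\<in>{1..cn (Suc n)}. \<Union>j\<in>{1..cn n}. (\<lambda>k. (n, i, j, k)) ` {0..<bundle_size n i j})"
    by (force simp: image_iff)
qed auto

lemma row_finite_paths: "row_finite paths path_range path_deg"
  unfolding row_finite_def
proof (intro ballI allI)
  fix v and n :: "nat \<times> nat" assume "v \<in> verts paths path_deg"
  then obtain w where v: "v = (w, [], 0)"
    by (cases v rule: prod_cases3) (auto simp: verts_def zero_prod_def)
  let ?E = "{e. is_edge e \<and> fst e < fst w + fst n}"
  have "{p \<in> paths. path_range p = v \<and> path_deg p = n} \<subseteq>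
      (\<lambda>es. (w, es, snd n)) ` {es. set es \<subseteq> ?E \<and> length es = fst n}"
    using chain_edge_levels by (force simp: v)
  moreover have "finite {es. set es \<subseteq> ?E \<and> length es = fst n}"
    by (rule finite_lists_length_eq) (rule finite_edges_below)
  ultimately show "finite {p \<in> paths. path_range p = v \<and> path_deg p = n}"
    by (meson finite_imageI finite_subset)
qed

section \<open>The diagram as a 2-graph on the natural numbers\<close>

definition P\<^sub>N :: "nat set" where
  "P\<^sub>N = to_nat ` paths"

definition r\<^sub>N :: "nat \<Rightarrow> nat" where
  "r\<^sub>N x = to_nat (path_range (from_nat x))"

definition s\<^sub>N :: "nat \<Rightarrow> nat" where
  "s\<^sub>N x = to_nat (path_source (from_nat x))"

definition c\<^sub>N :: "nat \<Rightarrow> nat \<Rightarrow> nat" where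
  "c\<^sub>N x y = to_nat (path_comp (from_nat x) (from_nat y))"

definition d\<^sub>N :: "nat \<Rightarrow> nat \<times> nat" where
  "d\<^sub>N x = path_deg (from_nat x)"

lemma two_graph_nat: "two_graph P\<^sub>N r\<^sub>N s\<^sub>N c\<^sub>N d\<^sub>N"
  using two_graph_relabel[OF two_graph_paths, of from_nat to_nat]
  unfolding P\<^sub>N_def r\<^sub>N_def[abs_def] s\<^sub>N_def[abs_def] c\<^sub>N_def[abs_def] d\<^sub>N_def[abs_def] by simp

lemma row_finite_nat: "row_finite P\<^sub>N r\<^sub>N d\<^sub>N"
  using row_finite_relabel[OF row_finite_paths, of from_nat to_nat]
  unfolding P\<^sub>N_def r\<^sub>N_def[abs_def] d\<^sub>N_def[abs_def] by simp

definition red_path :: "vertex \<Rightarrow> nat \<Rightarrow> nat" where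
  "red_path w b = to_nat ((w, [], b) :: path)"

abbreviation vert :: "vertex \<Rightarrow> nat" where
  "vert w \<equiv> red_path w 0"

definition blue_edge :: "edge \<Rightarrow> nat" where
  "blue_edge e = to_nat ((edge_range e, [e], 0) :: path)"

lemma red_path_simps [simp]:
  "r\<^sub>N (red_path w b) = vert w"
  "s\<^sub>N (red_path w b) = vert (rotate_vertex (- int b) w)"
  "d\<^sub>N (red_path w b) = (0, b)"
  "c\<^sub>N (red_path w b) (red_path w' b') = red_path w (b + b')"
  "red_path w b \<in> P\<^sub>N \<longleftrightarrow> is_vertex w"
  "red_path w b = red_path w' b' \<longleftrightarrow> w = w' \<and> b = b'"
  by (auto simp: red_path_def r\<^sub>N_def s\<^sub>N_def d\<^sub>N_def c\<^sub>N_def P\<^sub>N_def image_iff)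

lemma blue_edge_simps [simp]:
  "r\<^sub>N (blue_edge e) = vert (edge_range e)"
  "d\<^sub>N (blue_edge e) = (1, 0)"
  "blue_edge e \<in> P\<^sub>N \<longleftrightarrow> is_edge e"
  "blue_edge e = blue_edge e' \<longleftrightarrow> e = e'"
  by (auto simp: blue_edge_def red_path_def r\<^sub>N_def d\<^sub>N_def P\<^sub>N_def image_iff is_vertex_edge_range)

lemma source_blue_edge: "is_edge e \<Longrightarrow> s\<^sub>N (blue_edge e) = vert (edge_source e)"
  by (simp add: blue_edge_def red_path_def s\<^sub>N_def rotate_vertex_0 is_vertex_edge_source)

lemma red_blue_commute:
  "c\<^sub>N (red_path (rotate_vertex 1 (edge_range e)) 1) (blue_edge e) =
    c\<^sub>N (blue_edge (rotate_edge 1 e)) (red_path (edge_source (rotate_edge 1 e)) 1)"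
  by (simp add: blue_edge_def red_path_def c\<^sub>N_def edge_range_rotate)

lemma red_path_cases:
  assumes "x \<in> P\<^sub>N" "d\<^sub>N x = (0, b)"
  obtains w where "is_vertex w" "x = red_path w b"
  using assms by (auto simp: P\<^sub>N_def d\<^sub>N_def red_path_def)

lemma blue_edge_cases:
  assumes "x \<in> P\<^sub>N" "d\<^sub>N x = (1, 0)"
  obtains e where "is_edge e" "x = blue_edge e"
proof -
  obtain v es where x: "x = to_nat ((v, es, 0) :: path)" "(v, es, 0) \<in> paths" "length es = 1"
    using assms by (auto simp: P\<^sub>N_def d\<^sub>N_def)
  then obtain e where "es = [e]"
    by (metis One_nat_def length_0_conv length_Suc_conv)
  with x show ?thesis
    using that by (auto simp: blue_edge_def)
qed

section \<open>Levels and red cycles\<close>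

definition cycle_vertices :: "nat \<Rightarrow> nat \<Rightarrow> nat set" where
  "cycle_vertices n j = (\<lambda>x. vert (n, j, x)) ` {0..<cycle_len n j}"

definition level_vertices :: "nat \<Rightarrow> nat set" where
  "level_vertices n = (\<Union>j\<in>{1..cn n}. cycle_vertices n j)"

lemma vert_in_cycle_vertices [simp]:
  "vert w \<in> cycle_vertices n j \<longleftrightarrow> (\<exists>x. w = (n, j, x) \<and> 0 \<le> x \<and> x < cycle_len n j)"
  by (auto simp: cycle_vertices_def)

lemma vert_in_level_vertices [simp]: "vert w \<in> level_vertices n \<longleftrightarrow> is_vertex w \<and> fst w = n"
  by (cases w rule: prod_cases3) (auto simp: level_vertices_def)

lemma cycle_vertices_cases:
  assumes "y \<in> cycle_vertices n j"
  obtains x where "0 \<le> x" "x < cycle_len n j" "y = vert (n, j, x)"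
  using assms by (auto simp: cycle_vertices_def)

lemma card_cycle_vertices: "card (cycle_vertices n j) = T n j j"
proof -
  have "card (cycle_vertices n j) = card {0..<cycle_len n j}"
    unfolding cycle_vertices_def by (rule card_image) (simp add: inj_on_def)
  then show ?thesis
    by (simp add: cycle_len_def)
qed

lemma verts_nat: "verts P\<^sub>N d\<^sub>N = (\<Union>n. level_vertices n)"
proof (intro set_eqI iffI)
  fix y assume "y \<in> verts P\<^sub>N d\<^sub>N"
  then have "y \<in> P\<^sub>N" "d\<^sub>N y = (0, 0)"
    by (auto simp: verts_def zero_prod_def)
  then obtain w where "is_vertex w" "y = vert w"
    by (rule red_path_cases)
  then show "y \<in> (\<Union>n. level_vertices n)"
    by auto
next
  fix y assume "y \<in> (\<Union>n. level_vertices n)"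
  then show "y \<in> verts P\<^sub>N d\<^sub>N"
    by (auto simp: verts_def level_vertices_def cycle_vertices_def zero_prod_def)
qed

definition red_cycle :: "nat \<Rightarrow> nat \<Rightarrow> nat" where
  "red_cycle n j = red_path (n, j, 0) (T n j j)"

lemma red_cycle_split:
  "m \<le> T n j j \<Longrightarrow>
    red_cycle n j = c\<^sub>N (red_path (n, j, 0) m) (red_path (rotate_vertex (- int m) (n, j, 0)) (T n j j - m))"
  by (simp add: red_cycle_def)

lemma pt_red_cycle:
  assumes "j \<in> {1..cn n}" "m \<le> T n j j"
  shows "pt P\<^sub>N r\<^sub>N s\<^sub>N c\<^sub>N d\<^sub>N (red_cycle n j) (0, m) = vert (rotate_vertex (- int m) (n, j, 0))"
proof -
  have "is_vertex (n, j, 0)"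
    using assms(1) cycle_len_pos[OF assms(1)] by simp
  then show ?thesis
    using pt_prefix[OF two_graph_nat, of "red_path (n, j, 0) m"
        "red_path (rotate_vertex (- int m) (n, j, 0)) (T n j j - m)"]
    by (simp add: red_cycle_split[OF assms(2)] is_vertex_rotate del: rotate_vertex.simps is_vertex.simps)
qed

lemma is_cycle_red_cycle:
  assumes j: "j \<in> {1..cn n}"
  shows "is_cycle P\<^sub>N r\<^sub>N s\<^sub>N c\<^sub>N d\<^sub>N (red_cycle n j)"
  unfolding is_cycle_def
proof (intro conjI allI impI)
  show "red_cycle n j \<in> P\<^sub>N" "d\<^sub>N (red_cycle n j) \<noteq> 0" "r\<^sub>N (red_cycle n j) = s\<^sub>N (red_cycle n j)"
    using j cycle_len_pos[OF j] T_diag_pos[OF j] by (simp_all add: red_cycle_def cycle_len_def zero_prod_def)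
  fix m :: "nat \<times> nat" assume m: "0 < m \<and> m < d\<^sub>N (red_cycle n j)"
  then obtain q where q: "m = (0, q)" "0 < q" "q < T n j j"
    by (cases m) (auto simp: red_cycle_def less_prod_def less_eq_prod_def zero_prod_def)
  then have "(- int q) mod cycle_len n j \<noteq> 0"
    by (simp add: neg_mod_eq_diff cycle_len_def)
  then show "pt P\<^sub>N r\<^sub>N s\<^sub>N c\<^sub>N d\<^sub>N (red_cycle n j) m \<noteq> s\<^sub>N (red_cycle n j)"
    using q pt_red_cycle[OF j, of q] by (simp add: red_cycle_def cycle_len_def)
qed

lemma red_cycle_degree_cases:
  assumes "m \<le> d\<^sub>N (red_cycle n j)"
  obtains q where "m = (0, q)" "q \<le> T n j j"
  using assms by (cases m) (auto simp: red_cycle_def less_eq_prod_def)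

lemma seg_red_cycle_prefix:
  assumes j: "j \<in> {1..cn n}" and \<mu>: "\<mu> \<in> P\<^sub>N" "r\<^sub>N \<mu> = r\<^sub>N (red_cycle n j)" "d\<^sub>N \<mu> = m"
    and m: "m \<le> d\<^sub>N (red_cycle n j)"
  shows "\<mu> = seg P\<^sub>N r\<^sub>N s\<^sub>N c\<^sub>N d\<^sub>N (red_cycle n j) 0 m"
proof -
  obtain q where q: "m = (0, q)" "q \<le> T n j j"
    using m by (rule red_cycle_degree_cases)
  with \<mu> have \<mu>_eq: "\<mu> = red_path (n, j, 0) q"
    by (elim red_path_cases) (auto simp: red_cycle_def)
  have "is_vertex (n, j, 0)"
    using j cycle_len_pos[OF j] by simp
  then show ?thesis
    using seg_prefix[OF two_graph_nat, of \<mu> "red_path (rotate_vertex (- int q) (n, j, 0)) (T n j j - q)"] q \<mu>_eq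
    by (simp add: red_cycle_split[OF q(2)] is_vertex_rotate del: is_vertex.simps rotate_vertex.simps)
qed

lemma seg_red_cycle_suffix:
  assumes j: "j \<in> {1..cn n}" and \<mu>: "\<mu> \<in> P\<^sub>N" "s\<^sub>N \<mu> = s\<^sub>N (red_cycle n j)" "d\<^sub>N \<mu> = m"
    and m: "m \<le> d\<^sub>N (red_cycle n j)"
  shows "\<mu> = seg P\<^sub>N r\<^sub>N s\<^sub>N c\<^sub>N d\<^sub>N (red_cycle n j) (d\<^sub>N (red_cycle n j) - m) (d\<^sub>N (red_cycle n j))"
proof -
  let ?t = "T n j j"
  obtain q where q: "m = (0, q)" "q \<le> ?t"
    using m by (rule red_cycle_degree_cases)
  with \<mu> obtain w where w: "is_vertex w" "\<mu> = red_path w q" "rotate_vertex (- int q) w = (n, j, 0)"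
    by (elim red_path_cases) (auto simp: red_cycle_def cycle_len_def)
  have "w = rotate_vertex (int q) (n, j, 0)"
    using rotate_vertex_cancel[OF w(1), of "int q"] w(3) by simp
  also have "\<dots> = rotate_vertex (- int (?t - q)) (n, j, 0)"
    using q(2) by (simp add: of_nat_diff cycle_len_def)
  finally have "red_cycle n j = c\<^sub>N (red_path (n, j, 0) (?t - q)) \<mu>"
    and "s\<^sub>N (red_path (n, j, 0) (?t - q)) = r\<^sub>N \<mu>"
    using q(2) w(2) by (simp_all add: red_cycle_def)
  moreover have "is_vertex (n, j, 0)"
    using j cycle_len_pos[OF j] by simp
  ultimately show ?thesis
    using seg_suffix[OF two_graph_nat, of "red_path (n, j, 0) (?t - q)" \<mu>] \<mu>(1) q w(2)
    by (simp add: red_cycle_def)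
qed

lemma isolated_red_cycle: "j \<in> {1..cn n} \<Longrightarrow> isolated P\<^sub>N r\<^sub>N s\<^sub>N c\<^sub>N d\<^sub>N (red_cycle n j)"
  unfolding isolated_def using seg_red_cycle_prefix seg_red_cycle_suffix by blast

lemma iso_red_cycle_red_cycle: "j \<in> {1..cn n} \<Longrightarrow> iso_red_cycle P\<^sub>N r\<^sub>N s\<^sub>N c\<^sub>N d\<^sub>N (red_cycle n j)"
  using is_cycle_red_cycle isolated_red_cycle by (simp add: iso_red_cycle_def red_cycle_def)

lemma cyc_verts_red_cycle:
  assumes j: "j \<in> {1..cn n}"
  shows "cyc_verts P\<^sub>N r\<^sub>N s\<^sub>N c\<^sub>N d\<^sub>N (red_cycle n j) = cycle_vertices n j"
proof (intro set_eqI iffI)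
  fix y assume "y \<in> cyc_verts P\<^sub>N r\<^sub>N s\<^sub>N c\<^sub>N d\<^sub>N (red_cycle n j)"
  then obtain m where "m \<le> d\<^sub>N (red_cycle n j)" "y = pt P\<^sub>N r\<^sub>N s\<^sub>N c\<^sub>N d\<^sub>N (red_cycle n j) m"
    by (auto simp: cyc_verts_def)
  moreover from this(1) obtain q where "m = (0, q)" "q \<le> T n j j"
    by (rule red_cycle_degree_cases)
  ultimately show "y \<in> cycle_vertices n j"
    using pt_red_cycle[OF j] cycle_len_pos[OF j] by simp
next
  fix y assume "y \<in> cycle_vertices n j"
  then obtain x where x: "0 \<le> x" "x < cycle_len n j" "y = vert (n, j, x)"
    by (rule cycle_vertices_cases)
  define q where "q = nat (cycle_len n j - x)"
  have q: "q \<le> T n j j" "(- int q) mod cycle_len n j = x"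
    using x by (simp_all add: q_def cycle_len_def)
  then have "y = pt P\<^sub>N r\<^sub>N s\<^sub>N c\<^sub>N d\<^sub>N (red_cycle n j) (0, q)"
    using pt_red_cycle[OF j q(1)] x by simp
  moreover have "(0, q) \<le> d\<^sub>N (red_cycle n j)"
    using q by (simp add: red_cycle_def less_eq_prod_def)
  ultimately show "y \<in> cyc_verts P\<^sub>N r\<^sub>N s\<^sub>N c\<^sub>N d\<^sub>N (red_cycle n j)"
    by (auto simp: cyc_verts_def)
qed

section \<open>Blue edges and the map F\<close>

lemma blue_edges_between:
  assumes i: "i \<in> {1..cn (Suc n)}" and j: "j \<in> {1..cn n}"
  shows "{e \<in> P\<^sub>N. d\<^sub>N e = (1, 0) \<and> r\<^sub>N e \<in> cycle_vertices n j \<and> s\<^sub>N e \<in> cycle_vertices (Suc n) i} =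
    (\<lambda>k. blue_edge (n, i, j, k)) ` {0..<bundle_size n i j}"
proof (intro set_eqI iffI)
  fix e
  assume e: "e \<in> {e \<in> P\<^sub>N. d\<^sub>N e = (1, 0) \<and> r\<^sub>N e \<in> cycle_vertices n j \<and> s\<^sub>N e \<in> cycle_vertices (Suc n) i}"
  then obtain e' where e': "is_edge e'" "e = blue_edge e'"
    by (blast elim: blue_edge_cases)
  moreover obtain n' i' j' k where "e' = (n', i', j', k)"
    by (cases e' rule: prod_cases4)
  ultimately show "e \<in> (\<lambda>k. blue_edge (n, i, j, k)) ` {0..<bundle_size n i j}"
    using e by (auto simp: source_blue_edge)
next
  fix e assume "e \<in> (\<lambda>k. blue_edge (n, i, j, k)) ` {0..<bundle_size n i j}"
  then obtain k where k: "0 \<le> k" "k < bundle_size n i j" "e = blue_edge (n, i, j, k)"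
    by auto
  then show "e \<in> {e \<in> P\<^sub>N. d\<^sub>N e = (1, 0) \<and> r\<^sub>N e \<in> cycle_vertices n j \<and> s\<^sub>N e \<in> cycle_vertices (Suc n) i}"
    using i j cycle_len_pos[OF i] cycle_len_pos[OF j] by (simp add: source_blue_edge)
qed

lemma card_blue_edges_from:
  assumes i: "i \<in> {1..cn (Suc n)}" and j: "j \<in> {1..cn n}" and v: "v \<in> cycle_vertices n j"
  shows "card {e \<in> P\<^sub>N. d\<^sub>N e = (1, 0) \<and> r\<^sub>N e = v \<and> s\<^sub>N e \<in> cycle_vertices (Suc n) i} = A n i j"
proof -
  obtain x where x: "0 \<le> x" "x < cycle_len n j" "v = vert (n, j, x)"
    using v by (rule cycle_vertices_cases)
  have "{e \<in> P\<^sub>N. d\<^sub>N e = (1, 0) \<and> r\<^sub>N e = v \<and> s\<^sub>N e \<in> cycle_vertices (Suc n) i} =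
      {e \<in> {e \<in> P\<^sub>N. d\<^sub>N e = (1, 0) \<and> r\<^sub>N e \<in> cycle_vertices n j \<and> s\<^sub>N e \<in> cycle_vertices (Suc n) i}.
        r\<^sub>N e = v}"
    using v by blast
  also have "\<dots> = (\<lambda>k. blue_edge (n, i, j, k)) ` {k \<in> {0..<int (A n i j) * cycle_len n j}. k mod cycle_len n j = x}"
    unfolding blue_edges_between[OF i j] Compr_image_eq using x by (simp add: bundle_size_def cycle_len_def)
  finally show ?thesis
    using card_residue_class[OF x(1,2), of "A n i j"] by (simp add: card_image inj_on_def)
qed

lemma card_blue_edges_into:
  assumes i: "i \<in> {1..cn (Suc n)}" and j: "j \<in> {1..cn n}" and w: "w \<in> cycle_vertices (Suc n) i"
  shows "card {e \<in> P\<^sub>N. d\<^sub>N e = (1, 0) \<and> r\<^sub>N e \<in> cycle_vertices n j \<and> s\<^sub>N e = w} = B n i j"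
proof -
  obtain y where y: "0 \<le> y" "y < cycle_len (Suc n) i" "w = vert (Suc n, i, y)"
    using w by (rule cycle_vertices_cases)
  have "{e \<in> P\<^sub>N. d\<^sub>N e = (1, 0) \<and> r\<^sub>N e \<in> cycle_vertices n j \<and> s\<^sub>N e = w} =
      {e \<in> {e \<in> P\<^sub>N. d\<^sub>N e = (1, 0) \<and> r\<^sub>N e \<in> cycle_vertices n j \<and> s\<^sub>N e \<in> cycle_vertices (Suc n) i}.
        s\<^sub>N e = w}"
    using w by blast
  also have "\<dots> = (\<lambda>k. blue_edge (n, i, j, k)) `
      {k \<in> {0..<int (B n i j) * cycle_len (Suc n) i}. k mod cycle_len (Suc n) i = y}"
    unfolding blue_edges_between[OF i j] Compr_image_eq using i j y
    by (auto simp: bundle_size_eq_B source_blue_edge)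
  finally show ?thesis
    using card_residue_class[OF y(1,2), of "B n i j"] by (simp add: card_image inj_on_def)
qed

lemma Fmap_blue_edge:
  assumes e: "is_edge e"
  shows "Fmap P\<^sub>N r\<^sub>N s\<^sub>N c\<^sub>N d\<^sub>N (blue_edge e) = blue_edge (rotate_edge 1 e)"
proof -
  let ?f = "red_path (rotate_vertex 1 (edge_range e)) 1"
    and ?f' = "red_path (edge_source (rotate_edge 1 e)) 1"
  have v: "is_vertex (edge_range e)" "is_edge (rotate_edge 1 e)"
    using e by (simp_all add: is_vertex_edge_range is_edge_rotate)
  have f: "?f \<in> P\<^sub>N" "d\<^sub>N ?f = (0, 1)" "s\<^sub>N ?f = r\<^sub>N (blue_edge e)"
    using v(1) by (simp_all add: is_vertex_rotate rotate_vertex_add rotate_vertex_0 del: rotate_vertex.simps)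
  have f_unique: "g = ?f" if g: "g \<in> P\<^sub>N" "d\<^sub>N g = (0, 1)" "s\<^sub>N g = r\<^sub>N (blue_edge e)" for g
  proof -
    obtain w where w: "is_vertex w" "g = red_path w 1"
      using g(1,2) by (rule red_path_cases)
    then have "rotate_vertex (- 1) w = edge_range e"
      using g(3) by simp
    then show ?thesis
      using rotate_vertex_cancel[OF w(1), of 1] w(2) by simp
  qed
  have f': "?f' \<in> P\<^sub>N" "s\<^sub>N (blue_edge (rotate_edge 1 e)) = r\<^sub>N ?f'" "d\<^sub>N ?f' = (0, 1)"
    using v(2) by (simp_all add: is_vertex_edge_source source_blue_edge)
  show ?thesis
    by (rule Fmap_eqI[where f' = ?f' and \<beta> = "blue_edge (rotate_edge 1 e)",
          OF two_graph_nat f f_unique _ _ _ f'(1,2) _ f'(3) red_blue_commute])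
      (simp_all add: e v(2))
qed

lemma Fmap_power_blue_edge:
  assumes e: "is_edge e"
  shows "(Fmap P\<^sub>N r\<^sub>N s\<^sub>N c\<^sub>N d\<^sub>N ^^ m) (blue_edge e) = blue_edge (rotate_edge (int m) e)"
proof (induction m)
  case 0
  then show ?case
    using e by (simp add: rotate_edge_0)
next
  case (Suc m)
  then show ?case
    using Fmap_blue_edge[OF is_edge_rotate[OF e]] by (simp add: rotate_edge_add add.commute)
qed

lemma rotate_edge_eq_self_iff:
  assumes "is_edge (n, i, j, k)"
  shows "rotate_edge b (n, i, j, k) = (n, i, j, k) \<longleftrightarrow> bundle_size n i j dvd b"
proof -
  have "k mod bundle_size n i j = k"
    using assms by simp
  then show ?thesis
    using mod_eq_dvd_iff[of "k + b" "bundle_size n i j" k] by simp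
qed

lemma Fmap_orbit_blue_edge:
  assumes e: "is_edge (n, i, j, k)"
  shows "(Fmap P\<^sub>N r\<^sub>N s\<^sub>N c\<^sub>N d\<^sub>N ^^ m) (blue_edge (n, i, j, k)) = blue_edge (n, i, j, k) \<longleftrightarrow>
    A n i j * T n j j dvd m"
  using Fmap_power_blue_edge[OF e, of m] rotate_edge_eq_self_iff[OF e, of "int m"]
  by (simp add: bundle_size_def del: of_nat_mult)

lemma ordF_blue_edge:
  assumes e: "is_edge (n, i, j, k)"
  shows "ordF P\<^sub>N r\<^sub>N s\<^sub>N c\<^sub>N d\<^sub>N (blue_edge (n, i, j, k)) = A n i j * T n j j"
    and "\<exists>m>0. (Fmap P\<^sub>N r\<^sub>N s\<^sub>N c\<^sub>N d\<^sub>N ^^ m) (blue_edge (n, i, j, k)) = blue_edge (n, i, j, k)"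
proof -
  have "0 < bundle_size n i j"
    using e by simp
  then have pos: "0 < A n i j * T n j j"
    by (simp add: bundle_size_def del: of_nat_mult)
  show "ordF P\<^sub>N r\<^sub>N s\<^sub>N c\<^sub>N d\<^sub>N (blue_edge (n, i, j, k)) = A n i j * T n j j"
    unfolding ordF_def Fmap_orbit_blue_edge[OF e] using pos by (rule Least_positive_dvd)
  show "\<exists>m>0. (Fmap P\<^sub>N r\<^sub>N s\<^sub>N c\<^sub>N d\<^sub>N ^^ m) (blue_edge (n, i, j, k)) = blue_edge (n, i, j, k)"
    unfolding Fmap_orbit_blue_edge[OF e] using pos by (intro exI[of _ "A n i j * T n j j"]) simp
qed

lemma blue_edge_levels:
  assumes "e \<in> P\<^sub>N" "d\<^sub>N e = (1, 0)"
  shows "\<exists>n. r\<^sub>N e \<in> level_vertices n \<and> s\<^sub>N e \<in> level_vertices (Suc n)"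
proof -
  obtain e' where e': "is_edge e'" "e = blue_edge e'"
    using assms by (rule blue_edge_cases)
  moreover obtain n i j k where "e' = (n, i, j, k)"
    by (cases e' rule: prod_cases4)
  ultimately show ?thesis
    using is_vertex_edge_range[OF e'(1)] is_vertex_edge_source[OF e'(1)]
    by (auto simp: source_blue_edge simp del: is_vertex.simps)
qed

lemma red_edge_level:
  assumes "f \<in> P\<^sub>N" "d\<^sub>N f = (0, 1)"
  shows "\<exists>n. r\<^sub>N f \<in> level_vertices n \<and> s\<^sub>N f \<in> level_vertices n"
proof -
  obtain w where "is_vertex w" "f = red_path w 1"
    using assms by (rule red_path_cases)
  then show ?thesis
    using is_vertex_rotate[of w "- 1"]
    by (intro exI[of _ "fst w"]) (simp del: rotate_vertex.simps is_vertex.simps)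
qed

lemma vert_is_range_of_blue_edge:
  assumes w: "is_vertex w"
  shows "\<exists>e\<in>P\<^sub>N. d\<^sub>N e = (1, 0) \<and> r\<^sub>N e = vert w"
proof -
  obtain n j x where w_eq: "w = (n, j, x)"
    by (cases w rule: prod_cases3)
  with w have j: "j \<in> {1..cn n}" and x: "0 \<le> x" "x < cycle_len n j"
    by auto
  then obtain i where i: "i \<in> {1..cn (Suc n)}" "A n i j \<noteq> 0"
    using A_proper unfolding proper_mat_def by blast
  then have "cycle_len n j \<le> bundle_size n i j"
    using cycle_len_pos[OF j] by (simp add: bundle_size_def cycle_len_def)
  then have "is_edge (n, i, j, x)" "edge_range (n, i, j, x) = w"
    using i j x w_eq by simp_all
  then show ?thesis
    by (intro bexI[of _ "blue_edge (n, i, j, x)"]) simp_all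
qed

lemma vert_is_source_of_blue_edge:
  assumes w: "is_vertex w" and "fst w \<noteq> 0"
  shows "\<exists>e\<in>P\<^sub>N. d\<^sub>N e = (1, 0) \<and> s\<^sub>N e = vert w"
proof -
  obtain n i y where w_eq: "w = (Suc n, i, y)"
    using assms by (cases w rule: prod_cases3) (auto simp: gr0_conv_Suc)
  with w have i: "i \<in> {1..cn (Suc n)}" and y: "0 \<le> y" "y < cycle_len (Suc n) i"
    by auto
  then obtain j where j: "j \<in> {1..cn n}" "B n i j \<noteq> 0"
    using B_proper unfolding proper_mat_def by blast
  then have "cycle_len (Suc n) i \<le> bundle_size n i j"
    using cycle_len_pos[OF i] by (simp add: bundle_size_eq_B[OF i j(1)])
  then have "is_edge (n, i, j, y)" "edge_source (n, i, j, y) = w"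
    using i j y w_eq by simp_all
  then show ?thesis
    by (intro bexI[of _ "blue_edge (n, i, j, y)"]) (simp_all add: source_blue_edge)
qed

lemma bratteli2_nat: "bratteli2 P\<^sub>N r\<^sub>N s\<^sub>N c\<^sub>N d\<^sub>N level_vertices"
  unfolding bratteli2_def
proof (intro conjI allI ballI impI)
  show "two_graph P\<^sub>N r\<^sub>N s\<^sub>N c\<^sub>N d\<^sub>N" "row_finite P\<^sub>N r\<^sub>N d\<^sub>N"
    by (rule two_graph_nat row_finite_nat)+
  show "(\<Union>n. level_vertices n) = verts P\<^sub>N d\<^sub>N"
    by (rule verts_nat[symmetric])
next
  fix n
  have "1 \<in> {1..cn n}"
    using cn_pos by (simp add: Suc_le_eq)
  then have "vert (n, 1, 0) \<in> level_vertices n"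
    using cycle_len_pos[of 1 n] by simp
  then show "level_vertices n \<noteq> {}"
    by blast
  show "finite (level_vertices n)"
    by (simp add: level_vertices_def cycle_vertices_def)
next
  fix m n :: nat assume "m \<noteq> n"
  then show "level_vertices m \<inter> level_vertices n = {}"
    by (auto simp: level_vertices_def cycle_vertices_def)
next
  fix e assume "e \<in> P\<^sub>N" "d\<^sub>N e = (1, 0)"
  then show "\<exists>n. r\<^sub>N e \<in> level_vertices n \<and> s\<^sub>N e \<in> level_vertices (Suc n)"
    by (rule blue_edge_levels)
next
  fix f assume "f \<in> P\<^sub>N" "d\<^sub>N f = (0, 1)"
  then show "\<exists>n. r\<^sub>N f \<in> level_vertices n \<and> s\<^sub>N f \<in> level_vertices n"
    by (rule red_edge_level)
next
  fix v assume "v \<in> verts P\<^sub>N d\<^sub>N"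
  then obtain n j where j: "j \<in> {1..cn n}" and v: "v \<in> cycle_vertices n j"
    unfolding verts_nat level_vertices_def by blast
  from v obtain x where x: "0 \<le> x" "x < cycle_len n j" "v = vert (n, j, x)"
    by (rule cycle_vertices_cases)
  have w: "is_vertex (n, j, x)"
    using j x by simp
  show "\<exists>e\<in>P\<^sub>N. d\<^sub>N e = (1, 0) \<and> r\<^sub>N e = v"
    using vert_is_range_of_blue_edge[OF w] x(3) by simp
  show "\<not> (\<exists>e\<in>P\<^sub>N. d\<^sub>N e = (1, 0) \<and> s\<^sub>N e = v) \<Longrightarrow> v \<in> level_vertices 0"
    using vert_is_source_of_blue_edge[OF w] w x(3) by (cases n) auto
  show "\<exists>l. iso_red_cycle P\<^sub>N r\<^sub>N s\<^sub>N c\<^sub>N d\<^sub>N l \<and> v \<in> cyc_verts P\<^sub>N r\<^sub>N s\<^sub>N c\<^sub>N d\<^sub>N l"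
    using j v iso_red_cycle_red_cycle cyc_verts_red_cycle by blast
qed

lemma red_cycle_realises_cycle_vertices:
  "j \<in> {1..cn n} \<Longrightarrow>
    \<exists>l. iso_red_cycle P\<^sub>N r\<^sub>N s\<^sub>N c\<^sub>N d\<^sub>N l \<and> cyc_verts P\<^sub>N r\<^sub>N s\<^sub>N c\<^sub>N d\<^sub>N l = cycle_vertices n j"
  using iso_red_cycle_red_cycle cyc_verts_red_cycle by blast

lemma cycle_vertices_disjoint: "i \<noteq> j \<Longrightarrow> cycle_vertices n i \<inter> cycle_vertices n j = {}"
  by (auto simp: cycle_vertices_def)

lemma T_eq_card_cycle_vertices:
  "i \<in> {1..cn n} \<Longrightarrow> j \<in> {1..cn n} \<Longrightarrow> T n i j = (if i = j then card (cycle_vertices n j) else 0)"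
  using T_diag by (simp add: card_cycle_vertices)

lemma ordF_blue_edge_between:
  assumes i: "i \<in> {1..cn (Suc n)}" and j: "j \<in> {1..cn n}"
    and e: "e \<in> P\<^sub>N" "d\<^sub>N e = (1, 0)" "r\<^sub>N e \<in> cycle_vertices n j" "s\<^sub>N e \<in> cycle_vertices (Suc n) i"
  shows "\<exists>m>0. (Fmap P\<^sub>N r\<^sub>N s\<^sub>N c\<^sub>N d\<^sub>N ^^ m) e = e"
    and "ordF P\<^sub>N r\<^sub>N s\<^sub>N c\<^sub>N d\<^sub>N e = A n i j * card (cycle_vertices n j)"
proof -
  have "e \<in> (\<lambda>k. blue_edge (n, i, j, k)) ` {0..<bundle_size n i j}"
    unfolding blue_edges_between[OF i j, symmetric] using e by blast
  then obtain k where k: "0 \<le> k" "k < bundle_size n i j" "e = blue_edge (n, i, j, k)"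
    by auto
  then have "is_edge (n, i, j, k)"
    using i j by simp
  then show "\<exists>m>0. (Fmap P\<^sub>N r\<^sub>N s\<^sub>N c\<^sub>N d\<^sub>N ^^ m) e = e"
    and "ordF P\<^sub>N r\<^sub>N s\<^sub>N c\<^sub>N d\<^sub>N e = A n i j * card (cycle_vertices n j)"
    using ordF_blue_edge k(3) by (simp_all add: card_cycle_vertices)
qed

end

theorem proposition6p4:
  fixes cn :: "nat \<Rightarrow> nat"
    and A B T :: "nat \<Rightarrow> nat \<Rightarrow> nat \<Rightarrow> nat"
  assumes cpos: "\<forall>n. 0 < cn n"
    and Aprop: "\<forall>n. proper_mat (cn (Suc n)) (cn n) (A n)"
    and Bprop: "\<forall>n. proper_mat (cn (Suc n)) (cn n) (B n)"
    and Tprop: "\<forall>n. proper_mat (cn n) (cn n) (T n)"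
    and Tdiag: "\<forall>n. \<forall>i\<in>{1..cn n}. \<forall>j\<in>{1..cn n}. i \<noteq> j \<longrightarrow> T n i j = 0"
    and ATTB: "\<forall>n. \<forall>i\<in>{1..cn (Suc n)}. \<forall>j\<in>{1..cn n}.
                 (\<Sum>k=1..cn n. A n i k * T n k j) = (\<Sum>k=1..cn (Suc n). T (Suc n) i k * B n k j)"
  shows "\<exists>(P :: nat set) r s c d V (W :: nat \<Rightarrow> nat \<Rightarrow> nat set).
           bratteli2 P r s c d V \<and>
           (\<forall>n. (\<forall>j\<in>{1..cn n}. \<exists>l. iso_red_cycle P r s c d l \<and> cyc_verts P r s c d l = W n j) \<and>
                (\<forall>i\<in>{1..cn n}. \<forall>j\<in>{1..cn n}. i \<noteq> j \<longrightarrow> W n i \<inter> W n j = {}) \<and>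
                (\<Union>j\<in>{1..cn n}. W n j) = V n) \<and>
           (\<forall>n. \<forall>i\<in>{1..cn (Suc n)}. \<forall>j\<in>{1..cn n}. \<forall>v\<in>W n j.
              A n i j = card {e\<in>P. d e = (1,0) \<and> r e = v \<and> s e \<in> W (Suc n) i}) \<and>
           (\<forall>n. \<forall>i\<in>{1..cn (Suc n)}. \<forall>j\<in>{1..cn n}. \<forall>w\<in>W (Suc n) i.
              B n i j = card {e\<in>P. d e = (1,0) \<and> r e \<in> W n j \<and> s e = w}) \<and>
           (\<forall>n. \<forall>i\<in>{1..cn n}. \<forall>j\<in>{1..cn n}. T n i j = (if i = j then card (W n j) else 0)) \<and>
           (\<forall>n. \<forall>i\<in>{1..cn (Suc n)}. \<forall>j\<in>{1..cn n}. \<forall>e\<in>P.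
              d e = (1,0) \<and> r e \<in> W n j \<and> s e \<in> W (Suc n) i \<longrightarrow>
                (\<exists>k>0. (Fmap P r s c d ^^ k) e = e) \<and>
                ordF P r s c d e = A n i j * card (W n j))"
proof -
  interpret bratteli_data cn A B T
    using assms by (rule bratteli_data.intro)
  show ?thesis
  proof (rule exI[of _ P\<^sub>N], rule exI[of _ r\<^sub>N], rule exI[of _ s\<^sub>N], rule exI[of _ c\<^sub>N],
      rule exI[of _ d\<^sub>N], rule exI[of _ level_vertices], rule exI[of _ cycle_vertices],
      intro conjI allI ballI impI)
  qed (rule bratteli2_nat red_cycle_realises_cycle_vertices cycle_vertices_disjoint
      level_vertices_def[symmetric] card_blue_edges_from[symmetric] card_blue_edges_into[symmetric]
      T_eq_card_cycle_vertices ordF_blue_edge_between; auto)+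
qed

end
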